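(* Let $\lambda_1,\lambda_2\in[0,1]$, $\Phi\in\mathbb T$ irrational, $\theta\in\mathbb T$, and suppose $\psi\in\mathscr H_1$ satisfies $W_{\lambda_1,\lambda_2,\Phi,\theta}\psi=z\psi$ for some $z\in\partial\mathbb D$. For $\xi\in\mathbb T$ define the sequence $\varphi^\xi\in\mathbb C^{\mathbb Z}\otimes\mathbb C^2$ by $$\begin{bmatrix}\varphi_n^{\xi,+}\\ \varphi_n^{\xi,-}\end{bmatrix}=\frac{1}{\sqrt2}e^{2\pi in\theta}\begin{bmatrix}1&i\\ i&1\end{bmatrix}\begin{bmatrix}\check\psi^+(n\Phi+\xi)\\ \check\psi^-(n\Phi+\xi)\end{bmatrix},\qquad n\in\mathbb Z,$$ where $\check f(x)=\sum_{n\in\mathbb Z}e^{2\pi inx}f_n$ denotes the inverse Fourier transform (an $L^2(\mathbb T)$ function for $f\in\ell^2(\mathbb Z)$). Then $W^\sharp_{\lambda_1,\lambda_2,\Phi,\xi}\varphi^\xi=z\varphi^\xi$ (as a finite difference equation) for Lebesgue-a.e. $\xi\in\mathbb T$. If moreover $\psi\in\ell^1(\mathbb Z,\mathbb C^2)$, then this holds for every $\xi\in\mathbb T$.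
   Context: Let $\mathbb T=\mathbb R/\mathbb Z$ and $\partial\mathbb D=\{z\in\mathbb C:|z|=1\}$. Let $\mathscr H_1=\ell^2(\mathbb Z)\otimes\mathbb C^2$ with orthonormal basis $\delta_n^{s}=\delta_n\otimes e_s$ ($n\in\mathbb Z$, $s\in\{+,-\}$), $e_+=(1,0)^\top$, $e_-=(0,1)^\top$; write $\psi_n^s=\langle\delta_n^s,\psi\rangle$ and $\psi_n=(\psi_n^+,\psi_n^-)^\top$. For $\lambda\in[0,1]$ put $\lambda'=\sqrt{1-\lambda^2}$ and let $S_\lambda$ be the unitary operator with $S_\lambda\delta_n^\pm=\lambda\delta_{n\pm1}^\pm\pm\lambda'\delta_n^\mp$. For $\lambda_2\in[0,1]$, $\Phi,\theta\in\mathbb T$, $n\in\mathbb Z$ let $$Q_n=Q_{\lambda_2,\Phi,\theta,n}=\begin{bmatrix}\lambda_2\cos(2\pi(n\Phi+\theta))+i\lambda_2' & -\lambda_2\sin(2\pi(n\Phi+\theta))\\ \lambda_2\sin(2\pi(n\Phi+\theta)) & \lambda_2\cos(2\pi(n\Phi+\theta))-i\lambda_2'\end{bmatrix},$$ and let $Q_{\lambda_2,\Phi,\theta}$ act by $(Q\psi)_n=Q_n\psi_n$. The unitary almost-Mathieu operator is $W_{\lambda_1,\lambda_2,\Phi,\theta}=S_{\lambda_1}Q_{\lambda_2,\Phi,\theta}$ on $\mathscr H_1$, for $\lambda_1,\lambda_2\in[0,1]$. Transposes are taken with respect to the basis $\{\delta_n^s\}$. For a walk $W=S_\lambda Q$ with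 coins $Q_n=(q_n^{jk})_{j,k=1,2}$, the transpose acts (on arbitrary sequences, as a finite difference operator) by $[W^\top\psi]_n^+=q_n^{11}(\lambda\psi_{n+1}^++\lambda'\psi_n^-)+q_n^{21}(-\lambda'\psi_n^++\lambda\psi_{n-1}^-)$ and $[W^\top\psi]_n^-=q_n^{12}(\lambda\psi_{n+1}^++\lambda'\psi_n^-)+q_n^{22}(-\lambda'\psi_n^++\lambda\psi_{n-1}^-)$. The dual operator is $W^\sharp_{\lambda_1,\lambda_2,\Phi,\theta}:=W^\top_{\lambda_2,\lambda_1,\Phi,\theta}$ (note the exchange of $\lambda_1$ and $\lambda_2$). *)

theory Defs
  imports "HOL-Analysis.Analysis"
begin

text \<open>Vectors in C^2 are pairs: fst = (+)-component, snd = (-)-component.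
  Elements of l^2(Z) (x) C^2 (and arbitrary sequences) are maps int => complex * complex.\<close>

definition lamc :: "real \<Rightarrow> real" where
  "lamc l = sqrt (1 - l\<^sup>2)"

definition coin :: "real \<Rightarrow> real \<Rightarrow> real \<Rightarrow> int \<Rightarrow> nat \<Rightarrow> nat \<Rightarrow> complex" where
  "coin l2 Phi th n j k =
     (let c = complex_of_real (l2 * cos (2 * pi * (of_int n * Phi + th)));
          s = complex_of_real (l2 * sin (2 * pi * (of_int n * Phi + th)));
          d = \<i> * complex_of_real (lamc l2)
      in if j = 1 \<and> k = 1 then c + d
         else if j = 1 \<and> k = 2 then - s
         else if j = 2 \<and> k = 1 then s
         else c - d)"

text \<open>Shift S_l acting on sequences: S_l delta_n^+ = l delta_{n+1}^+ + l' delta_n^-,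
  S_l delta_n^- = l delta_{n-1}^- - l' delta_n^+.\<close>
definition shift_op :: "real \<Rightarrow> (int \<Rightarrow> complex \<times> complex) \<Rightarrow> int \<Rightarrow> complex \<times> complex" where
  "shift_op l psi n =
     (of_real l * fst (psi (n - 1)) - of_real (lamc l) * snd (psi n),
      of_real (lamc l) * fst (psi n) + of_real l * snd (psi (n + 1)))"

definition coin_op :: "(int \<Rightarrow> nat \<Rightarrow> nat \<Rightarrow> complex) \<Rightarrow> (int \<Rightarrow> complex \<times> complex) \<Rightarrow> int \<Rightarrow> complex \<times> complex" where
  "coin_op q psi n =
     (q n 1 1 * fst (psi n) + q n 1 2 * snd (psi n),
      q n 2 1 * fst (psi n) + q n 2 2 * snd (psi n))"

definition UAMO :: "real \<Rightarrow> real \<Rightarrow> real \<Rightarrow> real \<Rightarrow> (int \<Rightarrow> complex \<times> complex) \<Rightarrow> int \<Rightarrow> complex \<times> complex" where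
  "UAMO l1 l2 Phi th psi = shift_op l1 (coin_op (coin l2 Phi th) psi)"

text \<open>Transpose of the walk S_l Q (Q with entries q), as a finite difference operator.\<close>
definition walk_transpose :: "real \<Rightarrow> (int \<Rightarrow> nat \<Rightarrow> nat \<Rightarrow> complex) \<Rightarrow> (int \<Rightarrow> complex \<times> complex) \<Rightarrow> int \<Rightarrow> complex \<times> complex" where
  "walk_transpose l q psi n =
     (let a = of_real l * fst (psi (n + 1)) + of_real (lamc l) * snd (psi n);
          b = - of_real (lamc l) * fst (psi n) + of_real l * snd (psi (n - 1))
      in (q n 1 1 * a + q n 2 1 * b, q n 1 2 * a + q n 2 2 * b))"

text \<open>Dual operator W^sharp_{l1,l2,Phi,th} = (W_{l2,l1,Phi,th})^T.\<close>
definition UAMO_dual :: "real \<Rightarrow> real \<Rightarrow> real \<Rightarrow> real \<Rightarrow> (int \<Rightarrow> complex \<times> complex) \<Rightarrow> int \<Rightarrow> complex \<times> complex" where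
  "UAMO_dual l1 l2 Phi th = walk_transpose l2 (coin l1 Phi th)"

definition in_l2 :: "(int \<Rightarrow> complex \<times> complex) \<Rightarrow> bool" where
  "in_l2 psi \<longleftrightarrow> (\<lambda>n. (cmod (fst (psi n)))\<^sup>2 + (cmod (snd (psi n)))\<^sup>2) summable_on UNIV"

definition in_l1 :: "(int \<Rightarrow> complex \<times> complex) \<Rightarrow> bool" where
  "in_l1 psi \<longleftrightarrow> (\<lambda>n. cmod (fst (psi n)) + cmod (snd (psi n))) summable_on UNIV"

text \<open>g : R -> C (a 1-periodic function, i.e. a function on T) is a representative of the
  L^2(T) inverse Fourier transform of f in l^2(Z): g is measurable, 1-periodic and the
  partial sums sum_{|n|<=N} e^{2 pi i n x} f_n converge to g in L^2([0,1]).\<close>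
definition is_inv_fourier_L2 :: "(int \<Rightarrow> complex) \<Rightarrow> (real \<Rightarrow> complex) \<Rightarrow> bool" where
  "is_inv_fourier_L2 f g \<longleftrightarrow>
     g \<in> borel_measurable lborel \<and> (\<forall>x. g (x + 1) = g x) \<and>
     ((\<lambda>N::nat. \<integral>\<^sup>+ x \<in> {0..1}.
         ennreal ((cmod (g x - (\<Sum>n\<in>{- int N..int N}. cis (2 * pi * of_int n * x) * f n)))\<^sup>2) \<partial>lborel)
      \<longlonglongrightarrow> 0)"

text \<open>Pointwise inverse Fourier transform (used for f in l^1(Z), where the series converges absolutely).\<close>
definition inv_fourier :: "(int \<Rightarrow> complex) \<Rightarrow> real \<Rightarrow> complex" where
  "inv_fourier f x = (\<Sum>\<^sub>\<infinity>n\<in>UNIV. cis (2 * pi * of_int n * x) * f n)"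

text \<open>The sequence phi^xi built from functions gp, gm (standing for psi-check^+, psi-check^-).\<close>
definition phi_seq :: "real \<Rightarrow> real \<Rightarrow> (real \<Rightarrow> complex) \<Rightarrow> (real \<Rightarrow> complex) \<Rightarrow> real \<Rightarrow> int \<Rightarrow> complex \<times> complex" where
  "phi_seq Phi th gp gm xi n =
     (let c = cis (2 * pi * of_int n * th) / complex_of_real (sqrt 2);
          a = gp (of_int n * Phi + xi); b = gm (of_int n * Phi + xi)
      in (c * (a + \<i> * b), c * (\<i> * a + b)))"

end

theory Submission
  imports Defs
begin

text \<open>
  Under the inverse Fourier transform the walk becomes an operator on pairs of functions on the
  circle (\<open>fourier_walk\<close>): the shifts become multiplication by \<open>cis (\<plusminus>2\<pi>x)\<close>, and the coin,
  whose entries are trigonometric in \<open>n\<Phi> + \<theta>\<close>, becomes a combination of the translations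
  \<open>x \<mapsto> x \<plusminus> \<Phi>\<close>. Applying the dual operator to \<open>\<phi>\<^sup>\<xi>\<close> amounts to evaluating the transformed walk
  along the orbit \<open>n\<Phi> + \<xi>\<close>, so it suffices that the transformed eigenvalue equation holds at
  every point of that orbit.

  For \<open>\<psi>\<close> in \<open>\<ell>\<^sup>1\<close> the Fourier series converge absolutely and the transformed equation holds
  everywhere. For \<open>\<psi>\<close> in \<open>\<ell>\<^sup>2\<close>, the truncation of \<open>\<psi>\<close> to \<open>[-N, N]\<close> violates the eigenvalue
  equation only at the sites \<open>\<plusminus>N, \<plusminus>(N + 1)\<close>, so the Fourier partial sums satisfy the transformed
  equation up to an error controlled by the values of \<open>\<psi>\<close> near \<open>\<plusminus>N\<close>, which tend to 0. As the
  partial sums converge in \<open>L\<^sup>2\<close> on the circle and the transformed walk is dominated by translates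
  of its arguments, the transformed equation holds almost everywhere; countably many translates
  of a null set take care of all \<open>n\<close> at once.
\<close>

section \<open>Periodic functions and \<open>L\<^sup>2\<close> approximation\<close>

lemma power2_sum_le: "(a + b)\<^sup>2 \<le> 2 * (a\<^sup>2 + (b::real)\<^sup>2)"
proof -
  have "2 * (a\<^sup>2 + b\<^sup>2) = (a + b)\<^sup>2 + (a - b)\<^sup>2"
    by (simp add: power2_eq_square algebra_simps)
  then show ?thesis
    by simp
qed

lemma periodic_add_of_int:
  assumes "\<And>x. h (x + 1) = h x"
  shows "h (x + of_int k) = h x"
proof (induction k arbitrary: x rule: int_induct[where k = 0])
  case base
  then show ?case by simp
next
  case (step1 i)
  then show ?case using assms[of "x + of_int i"] by (simp add: algebra_simps)
next
  case (step2 i)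
  then show ?case using assms[of "x + of_int (i - 1)"] by (simp add: algebra_simps)
qed

lemma nn_integral_periodic_shift_le:
  fixes h :: "real \<Rightarrow> ennreal"
  assumes meas: "h \<in> borel_measurable borel" and periodic: "\<And>x. h (x + 1) = h x"
  shows "(\<integral>\<^sup>+x\<in>{-R..R}. h (x + c) \<partial>lborel)
           \<le> of_nat (2 * nat \<lceil>\<bar>R\<bar> + \<bar>c\<bar>\<rceil> + 3) * (\<integral>\<^sup>+x\<in>{0..1}. h x \<partial>lborel)"
proof -
  define M where "M = nat \<lceil>\<bar>R\<bar> + \<bar>c\<bar>\<rceil> + 1"
  define K where "K = {- int M..int M}"
  have "(\<integral>\<^sup>+x\<in>{-R..R}. h (x + c) \<partial>lborel) = (\<integral>\<^sup>+y\<in>{c - R..c + R}. h y \<partial>lborel)"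
    using nn_integral_real_affine[of "\<lambda>y. h y * indicator {c - R..c + R} y" 1 c] meas
    by (simp add: indicator_def add.commute)
  also have "\<dots> \<le> (\<integral>\<^sup>+y. (\<Sum>k\<in>K. h y * indicator {of_int k..of_int k + 1} y) \<partial>lborel)"
  proof (intro nn_integral_mono)
    fix y :: real
    show "h y * indicator {c - R..c + R} y \<le> (\<Sum>k\<in>K. h y * indicator {of_int k..of_int k + 1} y)"
    proof (cases "y \<in> {c - R..c + R}")
      case True
      then have "\<lfloor>y\<rfloor> \<in> K"
        unfolding K_def M_def by (auto, linarith+)
      moreover have "h y * indicator {c - R..c + R} y = h y * indicator {of_int \<lfloor>y\<rfloor>..of_int \<lfloor>y\<rfloor> + 1} y"
        using True by (simp add: indicator_def)
      ultimately show ?thesis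
        by (metis (no_types, lifting) K_def finite_atLeastAtMost_int member_le_sum zero_le)
    qed simp
  qed
  also have "\<dots> = (\<Sum>k\<in>K. \<integral>\<^sup>+y\<in>{of_int k..of_int k + 1}. h y \<partial>lborel)"
    by (rule nn_integral_sum) (use meas in measurable)
  also have "\<dots> = (\<Sum>k\<in>K. \<integral>\<^sup>+x\<in>{0..1}. h x \<partial>lborel)"
  proof (rule sum.cong[OF refl])
    fix k :: int
    show "(\<integral>\<^sup>+y\<in>{of_int k..of_int k + 1}. h y \<partial>lborel) = (\<integral>\<^sup>+x\<in>{0..1}. h x \<partial>lborel)"
      using nn_integral_real_affine[of "\<lambda>y. h y * indicator {of_int k..of_int k + 1} y" 1 "of_int k"] meas
      by (simp add: periodic_add_of_int[of h, OF periodic] add.commute indicator_def)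
  qed
  also have "\<dots> = of_nat (card K) * (\<integral>\<^sup>+x\<in>{0..1}. h x \<partial>lborel)"
    by simp
  also have "card K = 2 * M + 1"
    unfolding K_def by simp
  also have "\<dots> = 2 * nat \<lceil>\<bar>R\<bar> + \<bar>c\<bar>\<rceil> + 3"
    unfolding M_def by simp
  finally show ?thesis .
qed

lemma nn_integral_shifted_sum_square_le:
  fixes e :: "real \<Rightarrow> real" and c :: "'i \<Rightarrow> real"
  assumes meas: "e \<in> borel_measurable borel" and periodic: "\<And>x. e (x + 1) = e x"
  shows "(\<integral>\<^sup>+x\<in>{-R..R}. ennreal ((\<Sum>i\<in>I. e (x + c i))\<^sup>2) \<partial>lborel)
           \<le> of_nat (card I * (\<Sum>i\<in>I. 2 * nat \<lceil>\<bar>R\<bar> + \<bar>c i\<bar>\<rceil> + 3))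
               * (\<integral>\<^sup>+x\<in>{0..1}. ennreal ((e x)\<^sup>2) \<partial>lborel)"
proof -
  have [measurable]: "e \<in> borel_measurable borel"
    by (rule meas)
  have "(\<integral>\<^sup>+x\<in>{-R..R}. ennreal ((\<Sum>i\<in>I. e (x + c i))\<^sup>2) \<partial>lborel)
      \<le> (\<integral>\<^sup>+x. of_nat (card I) * (\<Sum>i\<in>I. ennreal ((e (x + c i))\<^sup>2) * indicator {-R..R} x) \<partial>lborel)"
  proof (intro nn_integral_mono)
    fix x
    have "(\<Sum>i\<in>I. e (x + c i))\<^sup>2 \<le> real (card I) * (\<Sum>i\<in>I. (e (x + c i))\<^sup>2)"
      using sum_squared_le_sum_of_squares[of "\<lambda>i. e (x + c i)" I] by (simp add: mult.commute)
    then have "ennreal ((\<Sum>i\<in>I. e (x + c i))\<^sup>2) \<le> ennreal (real (card I)) * ennreal (\<Sum>i\<in>I. (e (x + c i))\<^sup>2)"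
      by (simp add: ennreal_leI ennreal_mult[symmetric] sum_nonneg)
    then show "ennreal ((\<Sum>i\<in>I. e (x + c i))\<^sup>2) * indicator {-R..R} x
        \<le> of_nat (card I) * (\<Sum>i\<in>I. ennreal ((e (x + c i))\<^sup>2) * indicator {-R..R} x)"
      by (simp add: ennreal_of_nat_eq_real_of_nat sum_ennreal indicator_def)
  qed
  also have "\<dots> = of_nat (card I) * (\<Sum>i\<in>I. \<integral>\<^sup>+x\<in>{-R..R}. ennreal ((e (x + c i))\<^sup>2) \<partial>lborel)"
    by (simp add: nn_integral_cmult nn_integral_sum)
  also have "\<dots> \<le> of_nat (card I) * (\<Sum>i\<in>I. of_nat (2 * nat \<lceil>\<bar>R\<bar> + \<bar>c i\<bar>\<rceil> + 3)
                     * (\<integral>\<^sup>+x\<in>{0..1}. ennreal ((e x)\<^sup>2) \<partial>lborel))"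
    by (intro mult_left_mono sum_mono nn_integral_periodic_shift_le) (simp_all add: periodic)
  finally show ?thesis
    by (simp add: sum_distrib_right mult.assoc of_nat_sum)
qed

lemma nn_integral_shifted_sum_square_tendsto_0:
  fixes e :: "nat \<Rightarrow> real \<Rightarrow> real" and c :: "'i \<Rightarrow> real"
  assumes meas: "\<And>N. e N \<in> borel_measurable borel" and periodic: "\<And>N x. e N (x + 1) = e N x"
    and L2: "(\<lambda>N. \<integral>\<^sup>+x\<in>{0..1}. ennreal ((e N x)\<^sup>2) \<partial>lborel) \<longlonglongrightarrow> 0"
  shows "(\<lambda>N. \<integral>\<^sup>+x\<in>{-R..R}. ennreal ((\<Sum>i\<in>I. e N (x + c i))\<^sup>2) \<partial>lborel) \<longlonglongrightarrow> 0"
proof -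
  define C :: ennreal where "C = of_nat (card I * (\<Sum>i\<in>I. 2 * nat \<lceil>\<bar>R\<bar> + \<bar>c i\<bar>\<rceil> + 3))"
  have "(\<lambda>N. C * (\<integral>\<^sup>+x\<in>{0..1}. ennreal ((e N x)\<^sup>2) \<partial>lborel)) \<longlonglongrightarrow> C * 0"
    using L2 unfolding C_def by (intro ennreal_tendsto_cmult of_nat_less_top)
  then have lim: "(\<lambda>N. C * (\<integral>\<^sup>+x\<in>{0..1}. ennreal ((e N x)\<^sup>2) \<partial>lborel)) \<longlonglongrightarrow> 0"
    by simp
  show ?thesis
    using nn_integral_shifted_sum_square_le[OF meas periodic, where R = R and I = I and c = c, folded C_def]
    by (intro tendsto_sandwich[OF _ _ tendsto_const lim]) simp_all
qed

lemma ennreal_scaled_sum_square_le: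
  "ennreal ((K * (a + b))\<^sup>2) \<le> ennreal (2 * K\<^sup>2) * ennreal (a\<^sup>2) + ennreal (2 * K\<^sup>2) * ennreal (b\<^sup>2)"
proof -
  have "(K * (a + b))\<^sup>2 = K\<^sup>2 * (a + b)\<^sup>2"
    by (simp add: power_mult_distrib)
  also have "\<dots> \<le> K\<^sup>2 * (2 * (a\<^sup>2 + b\<^sup>2))"
    by (rule mult_left_mono[OF power2_sum_le]) simp
  also have "\<dots> = 2 * K\<^sup>2 * a\<^sup>2 + 2 * K\<^sup>2 * b\<^sup>2"
    by (simp add: algebra_simps)
  finally have "ennreal ((K * (a + b))\<^sup>2) \<le> ennreal (2 * K\<^sup>2 * a\<^sup>2 + 2 * K\<^sup>2 * b\<^sup>2)"
    by (rule ennreal_leI)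
  also have "\<dots> = ennreal (2 * K\<^sup>2 * a\<^sup>2) + ennreal (2 * K\<^sup>2 * b\<^sup>2)"
    by (rule ennreal_plus) simp_all
  also have "\<dots> = ennreal (2 * K\<^sup>2) * ennreal (a\<^sup>2) + ennreal (2 * K\<^sup>2) * ennreal (b\<^sup>2)"
    using ennreal_mult[of "2 * K\<^sup>2" "a\<^sup>2"] ennreal_mult[of "2 * K\<^sup>2" "b\<^sup>2"] by simp
  finally show ?thesis .
qed

lemma set_nn_integral_scaled_sum_square_tendsto_0:
  fixes a b :: "nat \<Rightarrow> 'a \<Rightarrow> real"
  assumes "A \<in> sets M" and "\<And>N. a N \<in> borel_measurable M" "\<And>N. b N \<in> borel_measurable M"
    and a: "(\<lambda>N. \<integral>\<^sup>+x\<in>A. ennreal ((a N x)\<^sup>2) \<partial>M) \<longlonglongrightarrow> 0"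
    and b: "(\<lambda>N. \<integral>\<^sup>+x\<in>A. ennreal ((b N x)\<^sup>2) \<partial>M) \<longlonglongrightarrow> 0"
  shows "(\<lambda>N. \<integral>\<^sup>+x\<in>A. ennreal ((K * (a N x + b N x))\<^sup>2) \<partial>M) \<longlonglongrightarrow> 0"
proof -
  note [measurable] = assms(1-3)
  define C where "C = ennreal (2 * K\<^sup>2)"
  have "(\<integral>\<^sup>+x\<in>A. ennreal ((K * (a N x + b N x))\<^sup>2) \<partial>M)
      \<le> (\<integral>\<^sup>+x. C * (ennreal ((a N x)\<^sup>2) * indicator A x) + C * (ennreal ((b N x)\<^sup>2) * indicator A x) \<partial>M)" for N
  proof (intro nn_integral_mono)
    fix x
    show "ennreal ((K * (a N x + b N x))\<^sup>2) * indicator A x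
        \<le> C * (ennreal ((a N x)\<^sup>2) * indicator A x) + C * (ennreal ((b N x)\<^sup>2) * indicator A x)"
      using ennreal_scaled_sum_square_le[of K "a N x" "b N x"] by (simp add: C_def indicator_def)
  qed
  also have "\<dots> N = C * (\<integral>\<^sup>+x\<in>A. ennreal ((a N x)\<^sup>2) \<partial>M) + C * (\<integral>\<^sup>+x\<in>A. ennreal ((b N x)\<^sup>2) \<partial>M)" for N
    by (simp add: nn_integral_add nn_integral_cmult)
  finally have bound: "(\<integral>\<^sup>+x\<in>A. ennreal ((K * (a N x + b N x))\<^sup>2) \<partial>M)
      \<le> C * (\<integral>\<^sup>+x\<in>A. ennreal ((a N x)\<^sup>2) \<partial>M) + C * (\<integral>\<^sup>+x\<in>A. ennreal ((b N x)\<^sup>2) \<partial>M)" for N .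
  have "(\<lambda>N. C * (\<integral>\<^sup>+x\<in>A. ennreal ((a N x)\<^sup>2) \<partial>M) + C * (\<integral>\<^sup>+x\<in>A. ennreal ((b N x)\<^sup>2) \<partial>M))
      \<longlonglongrightarrow> C * 0 + C * 0"
    by (intro tendsto_add ennreal_tendsto_cmult a b) (simp_all add: C_def)
  then have lim: "(\<lambda>N. C * (\<integral>\<^sup>+x\<in>A. ennreal ((a N x)\<^sup>2) \<partial>M) + C * (\<integral>\<^sup>+x\<in>A. ennreal ((b N x)\<^sup>2) \<partial>M))
      \<longlonglongrightarrow> 0"
    by simp
  show ?thesis
    by (rule tendsto_sandwich[OF _ _ tendsto_const lim]) (simp_all add: bound)
qed

lemma ennreal_norm_square_le_approx:
  fixes u v :: "'a::real_normed_vector"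
  assumes "norm (u - v) \<le> s" and "norm v \<le> d"
  shows "ennreal ((norm u)\<^sup>2) \<le> 2 * ennreal (s\<^sup>2) + ennreal (2 * d\<^sup>2)"
proof -
  have "norm u \<le> s + d"
    using norm_triangle_sub[of u v] assms by linarith
  then have "(norm u)\<^sup>2 \<le> (s + d)\<^sup>2"
    by (rule power_mono) simp
  also have "\<dots> \<le> 2 * s\<^sup>2 + 2 * d\<^sup>2"
    using power2_sum_le by (simp add: algebra_simps)
  finally have "ennreal ((norm u)\<^sup>2) \<le> ennreal (2 * s\<^sup>2 + 2 * d\<^sup>2)"
    by (rule ennreal_leI)
  then show ?thesis
    by (simp add: ennreal_plus ennreal_mult)
qed

lemma nn_integral_interval_eq_0_if_periodic_L2_approximation:
  fixes F :: "real \<Rightarrow> 'a::real_normed_vector" and Fs :: "nat \<Rightarrow> real \<Rightarrow> 'a"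
    and e :: "nat \<Rightarrow> real \<Rightarrow> real" and c :: "'i \<Rightarrow> real"
  assumes e_meas: "\<And>N. e N \<in> borel_measurable borel" and e_periodic: "\<And>N x. e N (x + 1) = e N x"
    and e_L2: "(\<lambda>N. \<integral>\<^sup>+x\<in>{0..1}. ennreal ((e N x)\<^sup>2) \<partial>lborel) \<longlonglongrightarrow> 0"
    and approx: "\<And>N x. norm (F x - Fs N x) \<le> (\<Sum>i\<in>I. e N (x + c i))"
    and small: "\<And>N x. norm (Fs N x) \<le> \<delta> N" and \<delta>: "\<delta> \<longlonglongrightarrow> 0"
  shows "(\<integral>\<^sup>+x\<in>{- real R..real R}. ennreal ((norm (F x))\<^sup>2) \<partial>lborel) = 0"
proof -
  define S where "S N = (\<integral>\<^sup>+x\<in>{- real R..real R}. ennreal ((\<Sum>i\<in>I. e N (x + c i))\<^sup>2) \<partial>lborel)" for N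
  define B where "B N = 2 * S N + ennreal (2 * (\<delta> N)\<^sup>2 * (2 * real R))" for N
  have [measurable]: "e N \<in> borel_measurable borel" for N
    by (rule e_meas)
  have "(\<integral>\<^sup>+x\<in>{- real R..real R}. ennreal ((norm (F x))\<^sup>2) \<partial>lborel)
      \<le> (\<integral>\<^sup>+x. 2 * (ennreal ((\<Sum>i\<in>I. e N (x + c i))\<^sup>2) * indicator {- real R..real R} x)
              + ennreal (2 * (\<delta> N)\<^sup>2) * indicator {- real R..real R} x \<partial>lborel)" for N
    using ennreal_norm_square_le_approx[OF approx small]
    by (intro nn_integral_mono) (simp add: indicator_def)
  also have "\<dots> N = B N" for N
    unfolding B_def S_def
    by (subst nn_integral_add) (simp_all add: nn_integral_cmult ennreal_mult mult_ac)
  finally have bound: "(\<integral>\<^sup>+x\<in>{- real R..real R}. ennreal ((norm (F x))\<^sup>2) \<partial>lborel) \<le> B N" for N .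
  have "S \<longlonglongrightarrow> 0"
    unfolding S_def by (rule nn_integral_shifted_sum_square_tendsto_0[OF e_meas e_periodic e_L2])
  then have "(\<lambda>N. 2 * S N) \<longlonglongrightarrow> 2 * 0"
    by (intro ennreal_tendsto_cmult) simp_all
  moreover have "(\<lambda>N. ennreal (2 * (\<delta> N)\<^sup>2 * (2 * real R))) \<longlonglongrightarrow> ennreal (2 * 0\<^sup>2 * (2 * real R))"
    by (intro tendsto_ennrealI tendsto_intros \<delta>)
  ultimately have lim: "B \<longlonglongrightarrow> 0"
    unfolding B_def using tendsto_add by fastforce
  have "(\<integral>\<^sup>+x\<in>{- real R..real R}. ennreal ((norm (F x))\<^sup>2) \<partial>lborel) \<le> 0"
    using bound by (intro tendsto_le[OF trivial_limit_sequentially lim tendsto_const] always_eventually allI)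
  then show ?thesis
    by simp
qed

lemma AE_eq_0_if_nn_integral_intervals_eq_0:
  fixes F :: "real \<Rightarrow> 'a::real_normed_vector"
  assumes "F \<in> borel_measurable borel"
    and zero: "\<And>R::nat. (\<integral>\<^sup>+x\<in>{- real R..real R}. ennreal ((norm (F x))\<^sup>2) \<partial>lborel) = 0"
  shows "AE x in lborel. F x = 0"
proof -
  have "AE x in lborel. x \<in> {- real R..real R} \<longrightarrow> F x = 0" for R :: nat
  proof -
    have "AE x in lborel. ennreal ((norm (F x))\<^sup>2) * indicator {- real R..real R} x = 0"
      using zero[of R] assms(1) by (subst (asm) nn_integral_0_iff_AE) simp_all
    then show ?thesis
      by (rule eventually_mono) (auto simp: indicator_def)
  qed
  then have "AE x in lborel. \<forall>R::nat. x \<in> {- real R..real R} \<longrightarrow> F x = 0"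
    by (subst AE_all_countable) blast
  then show ?thesis
  proof (rule eventually_mono)
    fix x assume zero_on: "\<forall>R::nat. x \<in> {- real R..real R} \<longrightarrow> F x = 0"
    have "\<bar>x\<bar> \<le> of_int \<lceil>\<bar>x\<bar>\<rceil>"
      by (rule le_of_int_ceiling)
    then have "x \<in> {- real (nat \<lceil>\<bar>x\<bar>\<rceil>)..real (nat \<lceil>\<bar>x\<bar>\<rceil>)}"
      unfolding abs_le_iff by simp
    with zero_on show "F x = 0"
      by blast
  qed
qed

lemma AE_eq_0_if_periodic_L2_approximation:
  fixes F :: "real \<Rightarrow> 'a::real_normed_vector" and Fs :: "nat \<Rightarrow> real \<Rightarrow> 'a"
    and e :: "nat \<Rightarrow> real \<Rightarrow> real" and c :: "'i \<Rightarrow> real"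
  assumes "F \<in> borel_measurable borel"
    and "\<And>N. e N \<in> borel_measurable borel" and "\<And>N x. e N (x + 1) = e N x"
    and "(\<lambda>N. \<integral>\<^sup>+x\<in>{0..1}. ennreal ((e N x)\<^sup>2) \<partial>lborel) \<longlonglongrightarrow> 0"
    and "\<And>N x. norm (F x - Fs N x) \<le> (\<Sum>i\<in>I. e N (x + c i))"
    and "\<And>N x. norm (Fs N x) \<le> \<delta> N" and "\<delta> \<longlonglongrightarrow> 0"
  shows "AE x in lborel. F x = 0"
  using assms(1) nn_integral_interval_eq_0_if_periodic_L2_approximation[OF assms(2-)]
  by (rule AE_eq_0_if_nn_integral_intervals_eq_0)

lemma AE_lborel_translate:
  fixes c :: real
  assumes "AE x in lborel. P x"
  shows "AE x in lborel. P (c + x)"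
proof -
  from assms obtain N where N: "{x. \<not> P x} \<subseteq> N" "N \<in> null_sets lborel"
    unfolding eventually_ae_filter by auto
  have "{x. x - (- c) \<in> N} \<in> null_sets lborel"
    by (rule null_sets_translation[OF N(2)])
  then show ?thesis
    by (rule AE_I') (use N(1) in \<open>auto simp: add.commute\<close>)
qed

lemma AE_lborel_orbit:
  fixes Phi :: real
  assumes "AE x in lborel. P x"
  shows "AE xi in lborel. \<forall>n::int. P (of_int n * Phi + xi)"
  using AE_lborel_translate[OF assms] by (subst AE_all_countable) blast


section \<open>Absolutely convergent Fourier series\<close>

lemma summable_on_bounded_mult:
  fixes f c :: "'a \<Rightarrow> complex"
  assumes "f summable_on A" and "\<And>n. norm (c n) \<le> K"
  shows "(\<lambda>n. c n * f n) summable_on A"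
proof -
  have "(\<lambda>n. K * norm (f n)) summable_on A"
    using assms(1) by (intro summable_on_cmult_right) (simp add: summable_on_iff_abs_summable_on_complex)
  then show ?thesis
    unfolding summable_on_iff_abs_summable_on_complex[of "\<lambda>n. c n * f n"]
    by (rule summable_on_comparison_test) (auto simp: norm_mult intro!: mult_right_mono assms(2))
qed

lemma summable_on_diff:
  fixes f g :: "'a \<Rightarrow> 'b::topological_ab_group_add"
  assumes "f summable_on A" and "g summable_on A"
  shows "(\<lambda>x. f x - g x) summable_on A"
  using summable_on_add[OF assms(1) summable_on_uminus[THEN iffD2, OF assms(2)]] by simp

lemma summable_on_cis_mult:
  "f summable_on A \<Longrightarrow> (\<lambda>n. cis (a n) * f n) summable_on A"
  by (rule summable_on_bounded_mult[where K = 1]) auto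

lemma summable_on_shift:
  fixes f :: "int \<Rightarrow> 'a::{comm_monoid_add, topological_space}"
  assumes "f summable_on UNIV"
  shows "(\<lambda>n. f (n + k)) summable_on UNIV"
proof -
  have "bij_betw (\<lambda>n. n + k) UNIV UNIV"
    by (rule bij_betwI[where g = "\<lambda>n. n - k"]) auto
  then show ?thesis
    using assms summable_on_reindex_bij_betw[of "\<lambda>n. n + k" UNIV UNIV f] by simp
qed

lemma inv_fourier_add:
  assumes "f summable_on UNIV" and "g summable_on UNIV"
  shows "inv_fourier (\<lambda>n. f n + g n) x = inv_fourier f x + inv_fourier g x"
  unfolding inv_fourier_def
  using infsum_add[OF summable_on_cis_mult[OF assms(1)] summable_on_cis_mult[OF assms(2)]]
  by (simp add: distrib_left)

lemma inv_fourier_cmult: "inv_fourier (\<lambda>n. c * f n) x = c * inv_fourier f x"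
  unfolding inv_fourier_def
  by (subst infsum_cmult_right'[symmetric]) (simp add: algebra_simps)

lemma inv_fourier_diff:
  assumes "f summable_on UNIV" and "g summable_on UNIV"
  shows "inv_fourier (\<lambda>n. f n - g n) x = inv_fourier f x - inv_fourier g x"
  using inv_fourier_add[OF assms(1) summable_on_uminus[THEN iffD2, OF assms(2)], of x]
    inv_fourier_cmult[of "-1" g x] by simp

lemma inv_fourier_modulate:
  "inv_fourier (\<lambda>n. cis (2 * pi * of_int n * c) * f n) x = inv_fourier f (x + c)"
  unfolding inv_fourier_def
  by (rule infsum_cong) (simp add: cis_mult distrib_left mult.assoc)

lemma inv_fourier_shift:
  "inv_fourier (\<lambda>n. f (n + k)) x = cis (- (2 * pi * of_int k * x)) * inv_fourier f x"
proof -
  have bij: "bij_betw (\<lambda>n. n + k) UNIV UNIV"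
    by (rule bij_betwI[where g = "\<lambda>n. n - k"]) auto
  have "inv_fourier (\<lambda>n. f (n + k)) x
      = (\<Sum>\<^sub>\<infinity>n\<in>UNIV. (\<lambda>m. cis (- (2 * pi * of_int k * x)) * (cis (2 * pi * of_int m * x) * f m)) (n + k))"
    unfolding inv_fourier_def
    by (rule infsum_cong) (simp add: cis_mult algebra_simps)
  also have "\<dots> = (\<Sum>\<^sub>\<infinity>m\<in>UNIV. cis (- (2 * pi * of_int k * x)) * (cis (2 * pi * of_int m * x) * f m))"
    by (rule infsum_reindex_bij_betw[OF bij])
  also have "\<dots> = cis (- (2 * pi * of_int k * x)) * inv_fourier f x"
    unfolding inv_fourier_def by (rule infsum_cmult_right')
  finally show ?thesis .
qed

lemma norm_inv_fourier_le_finite_support: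
  assumes "finite B" and "\<And>n. n \<notin> B \<Longrightarrow> f n = 0"
  shows "cmod (inv_fourier f x) \<le> (\<Sum>n\<in>B. cmod (f n))"
proof -
  have "inv_fourier f x = (\<Sum>\<^sub>\<infinity>n\<in>B. cis (2 * pi * of_int n * x) * f n)"
    unfolding inv_fourier_def by (rule infsum_cong_neutral) (use assms(2) in auto)
  also have "\<dots> = (\<Sum>n\<in>B. cis (2 * pi * of_int n * x) * f n)"
    using assms(1) by (rule infsum_finite)
  finally have "cmod (inv_fourier f x) \<le> (\<Sum>n\<in>B. cmod (cis (2 * pi * of_int n * x) * f n))"
    using norm_sum by metis
  then show ?thesis
    by (simp add: norm_mult)
qed

definition truncate :: "nat \<Rightarrow> (int \<Rightarrow> 'a::zero) \<Rightarrow> int \<Rightarrow> 'a" where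
  "truncate N f n = (if \<bar>n\<bar> \<le> int N then f n else 0)"

lemma fst_truncate [simp]: "fst (truncate N psi n) = truncate N (\<lambda>n. fst (psi n)) n"
  and snd_truncate [simp]: "snd (truncate N psi n) = truncate N (\<lambda>n. snd (psi n)) n"
  by (simp_all add: truncate_def)

lemma summable_on_truncate: "truncate N f summable_on UNIV"
proof -
  have "truncate N f summable_on {- int N..int N}" by simp
  moreover have "truncate N f summable_on {- int N..int N} \<longleftrightarrow> truncate N f summable_on UNIV"
    by (rule summable_on_cong_neutral) (auto simp: truncate_def)
  ultimately show ?thesis by simp
qed

definition fourier_partial_sum :: "nat \<Rightarrow> (int \<Rightarrow> complex) \<Rightarrow> real \<Rightarrow> complex" where
  "fourier_partial_sum N f x = (\<Sum>n\<in>{- int N..int N}. cis (2 * pi * of_int n * x) * f n)"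

lemma inv_fourier_truncate: "inv_fourier (truncate N f) x = fourier_partial_sum N f x"
proof -
  have "inv_fourier (truncate N f) x = (\<Sum>\<^sub>\<infinity>n\<in>{- int N..int N}. cis (2 * pi * of_int n * x) * f n)"
    unfolding inv_fourier_def by (rule infsum_cong_neutral) (auto simp: truncate_def)
  then show ?thesis
    by (simp add: fourier_partial_sum_def)
qed

lemma cis_int_periodic: "cis (2 * pi * of_int n * (x + 1)) = cis (2 * pi * of_int n * x)"
proof -
  have "cis (2 * pi * of_int n * (x + 1)) = cis (2 * pi * of_int n * x) * cis (2 * pi * of_int n)"
    by (simp add: cis_mult algebra_simps)
  then show ?thesis
    by (simp add: cis_multiple_2pi)
qed

lemma fourier_partial_sum_periodic: "fourier_partial_sum N f (x + 1) = fourier_partial_sum N f x"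
  by (simp add: fourier_partial_sum_def cis_int_periodic)

lemma borel_measurable_fourier_partial_sum: "fourier_partial_sum N f \<in> borel_measurable borel"
  unfolding fourier_partial_sum_def
  by (intro borel_measurable_continuous_onI continuous_intros)


section \<open>The walk in Fourier space\<close>

text \<open>
  Under \<open>inv_fourier\<close>, multiplying the \<open>n\<close>-th coefficient by \<open>cos (2\<pi>(n\<Phi> + \<theta>))\<close> or
  \<open>sin (2\<pi>(n\<Phi> + \<theta>))\<close> becomes the following combination of the translates by \<open>\<plusminus>\<Phi>\<close>
  (\<open>inv_fourier_cos_mult\<close>, \<open>inv_fourier_sin_mult\<close>); \<open>fourier_coin\<close> and \<open>fourier_walk\<close> are the
  images of \<open>coin_op\<close> and \<open>UAMO\<close> (\<open>inv_fourier_UAMO\<close>).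
\<close>

definition fourier_cos_mult :: "real \<Rightarrow> real \<Rightarrow> (real \<Rightarrow> complex) \<Rightarrow> real \<Rightarrow> complex" where
  "fourier_cos_mult Phi th F x =
     (cis (2 * pi * th) * F (x + Phi) + inverse (cis (2 * pi * th)) * F (x - Phi)) / 2"

definition fourier_sin_mult :: "real \<Rightarrow> real \<Rightarrow> (real \<Rightarrow> complex) \<Rightarrow> real \<Rightarrow> complex" where
  "fourier_sin_mult Phi th F x =
     (cis (2 * pi * th) * F (x + Phi) - inverse (cis (2 * pi * th)) * F (x - Phi)) / (2 * \<i>)"

definition fourier_coin ::
    "real \<Rightarrow> real \<Rightarrow> real \<Rightarrow> (real \<Rightarrow> complex) \<Rightarrow> (real \<Rightarrow> complex) \<Rightarrow> real \<Rightarrow> complex \<times> complex" where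
  "fourier_coin l2 Phi th F G x =
     (of_real l2 * fourier_cos_mult Phi th F x - of_real l2 * fourier_sin_mult Phi th G x
        + \<i> * of_real (lamc l2) * F x,
      of_real l2 * fourier_sin_mult Phi th F x + of_real l2 * fourier_cos_mult Phi th G x
        - \<i> * of_real (lamc l2) * G x)"

definition fourier_walk ::
    "real \<Rightarrow> real \<Rightarrow> real \<Rightarrow> real \<Rightarrow> (real \<Rightarrow> complex) \<Rightarrow> (real \<Rightarrow> complex) \<Rightarrow> real \<Rightarrow> complex \<times> complex" where
  "fourier_walk l1 l2 Phi th F G x =
     (let w = fourier_coin l2 Phi th F G x
      in (of_real l1 * cis (2 * pi * x) * fst w - of_real (lamc l1) * snd w,
          of_real (lamc l1) * fst w + of_real l1 * cis (- (2 * pi * x)) * snd w))"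

lemma cos_eq_cis: "complex_of_real (cos y) = (cis y + inverse (cis y)) / 2"
  by (simp add: cis_inverse cos_of_real complex_eq_iff)

lemma sin_eq_cis: "complex_of_real (sin y) = (cis y - inverse (cis y)) / (2 * \<i>)"
  by (simp add: cis_inverse complex_eq_iff)

lemma cis_orbit: "cis (2 * pi * (of_int n * Phi + th)) = cis (2 * pi * of_int n * Phi) * cis (2 * pi * th)"
  by (simp add: cis_mult distrib_left mult.assoc)

lemma cos_orbit_eq_cis:
  "complex_of_real (cos (2 * pi * (of_int n * Phi + th)))
     = cis (2 * pi * th) / 2 * cis (2 * pi * of_int n * Phi)
       + inverse (cis (2 * pi * th)) / 2 * cis (2 * pi * of_int n * (- Phi))"
proof -
  have "cis (2 * pi * of_int n * (- Phi)) = inverse (cis (2 * pi * of_int n * Phi))"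
    by (simp add: cis_inverse)
  then show ?thesis
    unfolding cos_eq_cis cis_orbit by (simp add: field_simps del: cis_inverse)
qed

lemma sin_orbit_eq_cis:
  "complex_of_real (sin (2 * pi * (of_int n * Phi + th)))
     = cis (2 * pi * th) / (2 * \<i>) * cis (2 * pi * of_int n * Phi)
       - inverse (cis (2 * pi * th)) / (2 * \<i>) * cis (2 * pi * of_int n * (- Phi))"
proof -
  have "cis (2 * pi * of_int n * (- Phi)) = inverse (cis (2 * pi * of_int n * Phi))"
    by (simp add: cis_inverse)
  then show ?thesis
    unfolding sin_eq_cis cis_orbit by (simp add: field_simps del: cis_inverse)
qed

lemma inv_fourier_cos_mult:
  assumes "f summable_on UNIV"
  shows "inv_fourier (\<lambda>n. complex_of_real (cos (2 * pi * (of_int n * Phi + th))) * f n) x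
           = fourier_cos_mult Phi th (inv_fourier f) x"
proof -
  define t where "t = cis (2 * pi * th)"
  have "complex_of_real (cos (2 * pi * (of_int n * Phi + th))) * f n
      = t / 2 * (cis (2 * pi * of_int n * Phi) * f n) + inverse t / 2 * (cis (2 * pi * of_int n * (- Phi)) * f n)"
    for n
    unfolding cos_orbit_eq_cis t_def by (simp only: distrib_right mult.assoc)
  then have "inv_fourier (\<lambda>n. complex_of_real (cos (2 * pi * (of_int n * Phi + th))) * f n) x
      = t / 2 * inv_fourier f (x + Phi) + inverse t / 2 * inv_fourier f (x + - Phi)"
    by (simp only: inv_fourier_add summable_on_cmult_right summable_on_cis_mult assms
        inv_fourier_cmult inv_fourier_modulate)
  then show ?thesis
    unfolding fourier_cos_mult_def t_def by (simp add: field_simps)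
qed

lemma inv_fourier_sin_mult:
  assumes "f summable_on UNIV"
  shows "inv_fourier (\<lambda>n. complex_of_real (sin (2 * pi * (of_int n * Phi + th))) * f n) x
           = fourier_sin_mult Phi th (inv_fourier f) x"
proof -
  define t where "t = cis (2 * pi * th)"
  have "complex_of_real (sin (2 * pi * (of_int n * Phi + th))) * f n
      = t / (2 * \<i>) * (cis (2 * pi * of_int n * Phi) * f n)
        - inverse t / (2 * \<i>) * (cis (2 * pi * of_int n * (- Phi)) * f n)"
    for n
    unfolding sin_orbit_eq_cis t_def by (simp only: left_diff_distrib mult.assoc)
  then have "inv_fourier (\<lambda>n. complex_of_real (sin (2 * pi * (of_int n * Phi + th))) * f n) x
      = t / (2 * \<i>) * inv_fourier f (x + Phi) - inverse t / (2 * \<i>) * inv_fourier f (x + - Phi)"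
    by (simp only: inv_fourier_diff summable_on_cmult_right summable_on_cis_mult assms
        inv_fourier_cmult inv_fourier_modulate)
  then show ?thesis
    unfolding fourier_sin_mult_def t_def by (simp add: field_simps)
qed

lemma lamc_bounds: "0 \<le> l \<Longrightarrow> l \<le> 1 \<Longrightarrow> 0 \<le> lamc l \<and> lamc l \<le> 1"
  unfolding lamc_def by (auto simp: power_le_one)

lemma norm_coin_le:
  assumes "0 \<le> l2" "l2 \<le> 1"
  shows "cmod (coin l2 Phi th n j k) \<le> 2"
proof -
  define a where "a = 2 * pi * (of_int n * Phi + th)"
  have "\<bar>l2 * cos a\<bar> \<le> 1" "\<bar>l2 * sin a\<bar> \<le> 1"
    using assms abs_cos_le_one[of a] abs_sin_le_one[of a] by (simp_all add: abs_mult mult_le_one)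
  then have cos: "cmod (complex_of_real (l2 * cos a)) \<le> 1" and sin: "cmod (complex_of_real (l2 * sin a)) \<le> 1"
    by (simp_all only: norm_of_real)
  have "cmod (\<i> * complex_of_real (lamc l2)) \<le> 1"
    using lamc_bounds[OF assms] by (simp add: norm_mult)
  then show ?thesis
    unfolding coin_def Let_def a_def[symmetric]
    using cos sin norm_triangle_ineq[of "complex_of_real (l2 * cos a)" "\<i> * complex_of_real (lamc l2)"]
      norm_triangle_ineq4[of "complex_of_real (l2 * cos a)" "\<i> * complex_of_real (lamc l2)"]
    by (auto simp del: norm_of_real)
qed

lemma summable_on_coin_op:
  assumes "0 \<le> l2" "l2 \<le> 1"
    and f: "(\<lambda>n. fst (psi n)) summable_on UNIV" and g: "(\<lambda>n. snd (psi n)) summable_on UNIV"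
  shows "(\<lambda>n. fst (coin_op (coin l2 Phi th) psi n)) summable_on UNIV"
    and "(\<lambda>n. snd (coin_op (coin l2 Phi th) psi n)) summable_on UNIV"
  unfolding coin_op_def fst_conv snd_conv
  by (intro summable_on_add summable_on_bounded_mult[OF f, where K = 2]
        summable_on_bounded_mult[OF g, where K = 2] norm_coin_le[OF assms(1,2)])+

lemma inv_fourier_coin_op:
  assumes f: "(\<lambda>n. fst (psi n)) summable_on UNIV" and g: "(\<lambda>n. snd (psi n)) summable_on UNIV"
  shows "(inv_fourier (\<lambda>n. fst (coin_op (coin l2 Phi th) psi n)) x,
          inv_fourier (\<lambda>n. snd (coin_op (coin l2 Phi th) psi n)) x)
           = fourier_coin l2 Phi th (inv_fourier (\<lambda>n. fst (psi n))) (inv_fourier (\<lambda>n. snd (psi n))) x"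
proof -
  define c where "c n = complex_of_real (cos (2 * pi * (of_int n * Phi + th)))" for n
  define s where "s n = complex_of_real (sin (2 * pi * (of_int n * Phi + th)))" for n
  have bounded: "norm (c n) \<le> 1" "norm (s n) \<le> 1" for n
    by (simp_all add: c_def s_def)
  have summable: "(\<lambda>n. c n * fst (psi n)) summable_on UNIV" "(\<lambda>n. s n * fst (psi n)) summable_on UNIV"
    "(\<lambda>n. c n * snd (psi n)) summable_on UNIV" "(\<lambda>n. s n * snd (psi n)) summable_on UNIV"
    by (intro summable_on_bounded_mult[OF f, where K = 1] summable_on_bounded_mult[OF g, where K = 1]
        bounded)+
  have "coin_op (coin l2 Phi th) psi n
     = (of_real l2 * (c n * fst (psi n)) - of_real l2 * (s n * snd (psi n)) + \<i> * of_real (lamc l2) * fst (psi n),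
        of_real l2 * (s n * fst (psi n)) + of_real l2 * (c n * snd (psi n)) - \<i> * of_real (lamc l2) * snd (psi n))"
    for n
    unfolding coin_op_def coin_def Let_def c_def s_def of_real_mult by (simp add: algebra_simps)
  moreover have "inv_fourier (\<lambda>n. c n * fst (psi n)) x = fourier_cos_mult Phi th (inv_fourier (\<lambda>n. fst (psi n))) x"
    "inv_fourier (\<lambda>n. s n * fst (psi n)) x = fourier_sin_mult Phi th (inv_fourier (\<lambda>n. fst (psi n))) x"
    "inv_fourier (\<lambda>n. c n * snd (psi n)) x = fourier_cos_mult Phi th (inv_fourier (\<lambda>n. snd (psi n))) x"
    "inv_fourier (\<lambda>n. s n * snd (psi n)) x = fourier_sin_mult Phi th (inv_fourier (\<lambda>n. snd (psi n))) x"
    unfolding c_def s_def using f g by (simp_all only: inv_fourier_cos_mult inv_fourier_sin_mult)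
  ultimately show ?thesis
    unfolding fourier_coin_def
    by (simp add: inv_fourier_add inv_fourier_diff inv_fourier_cmult summable_on_add summable_on_diff
        summable_on_cmult_right summable f g)
qed

lemma summable_on_UAMO:
  assumes "0 \<le> l2" "l2 \<le> 1"
    and "(\<lambda>n. fst (psi n)) summable_on UNIV" and "(\<lambda>n. snd (psi n)) summable_on UNIV"
  shows "(\<lambda>n. fst (UAMO l1 l2 Phi th psi n)) summable_on UNIV"
    and "(\<lambda>n. snd (UAMO l1 l2 Phi th psi n)) summable_on UNIV"
proof -
  note coin_op = summable_on_coin_op[OF assms, of Phi th]
  have shifted: "(\<lambda>n. fst (coin_op (coin l2 Phi th) psi (n - 1))) summable_on UNIV"
    "(\<lambda>n. snd (coin_op (coin l2 Phi th) psi (n + 1))) summable_on UNIV"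
    using summable_on_shift[OF coin_op(1), of "-1"] summable_on_shift[OF coin_op(2), of 1] by simp_all
  show "(\<lambda>n. fst (UAMO l1 l2 Phi th psi n)) summable_on UNIV"
    and "(\<lambda>n. snd (UAMO l1 l2 Phi th psi n)) summable_on UNIV"
    unfolding UAMO_def shift_op_def fst_conv snd_conv
    by (intro summable_on_add summable_on_diff summable_on_cmult_right coin_op shifted)+
qed

lemma inv_fourier_UAMO:
  assumes "0 \<le> l2" "l2 \<le> 1"
    and f: "(\<lambda>n. fst (psi n)) summable_on UNIV" and g: "(\<lambda>n. snd (psi n)) summable_on UNIV"
  shows "(inv_fourier (\<lambda>n. fst (UAMO l1 l2 Phi th psi n)) x,
          inv_fourier (\<lambda>n. snd (UAMO l1 l2 Phi th psi n)) x)
           = fourier_walk l1 l2 Phi th (inv_fourier (\<lambda>n. fst (psi n))) (inv_fourier (\<lambda>n. snd (psi n))) x"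
proof -
  define u where "u n = fst (coin_op (coin l2 Phi th) psi n)" for n
  define v where "v n = snd (coin_op (coin l2 Phi th) psi n)" for n
  have u: "u summable_on UNIV" and v: "v summable_on UNIV"
    unfolding u_def v_def by (rule summable_on_coin_op[OF assms])+
  have shifted: "inv_fourier (\<lambda>n. u (n - 1)) x = cis (2 * pi * x) * inv_fourier u x"
    "inv_fourier (\<lambda>n. v (n + 1)) x = cis (- (2 * pi * x)) * inv_fourier v x"
    using inv_fourier_shift[of u "-1" x] inv_fourier_shift[of v 1 x] by simp_all
  have "UAMO l1 l2 Phi th psi n
      = (of_real l1 * u (n - 1) - of_real (lamc l1) * v n, of_real (lamc l1) * u n + of_real l1 * v (n + 1))"
    for n
    unfolding UAMO_def shift_op_def u_def v_def by simp
  then show ?thesis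
    using inv_fourier_coin_op[OF f g, of l2 Phi th x, folded u_def v_def, symmetric]
    unfolding fourier_walk_def Let_def
    by (simp add: inv_fourier_add inv_fourier_diff inv_fourier_cmult summable_on_cmult_right
        summable_on_shift[of _ "-1", simplified] summable_on_shift u v shifted mult.assoc)
qed

definition eigen_residual ::
    "real \<Rightarrow> real \<Rightarrow> real \<Rightarrow> real \<Rightarrow> complex \<Rightarrow> (int \<Rightarrow> complex \<times> complex) \<Rightarrow> int \<Rightarrow> complex \<times> complex" where
  "eigen_residual l1 l2 Phi th z psi n = UAMO l1 l2 Phi th psi n - (z * fst (psi n), z * snd (psi n))"

lemma inv_fourier_eigen_residual:
  assumes "0 \<le> l2" "l2 \<le> 1"
    and f: "(\<lambda>n. fst (psi n)) summable_on UNIV" and g: "(\<lambda>n. snd (psi n)) summable_on UNIV"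
  defines "F \<equiv> inv_fourier (\<lambda>n. fst (psi n))" and "G \<equiv> inv_fourier (\<lambda>n. snd (psi n))"
  shows "(inv_fourier (\<lambda>n. fst (eigen_residual l1 l2 Phi th z psi n)) x,
          inv_fourier (\<lambda>n. snd (eigen_residual l1 l2 Phi th z psi n)) x)
           = fourier_walk l1 l2 Phi th F G x - (z * F x, z * G x)"
  using inv_fourier_UAMO[OF assms(1-4), of l1 Phi th x, symmetric]
  by (simp add: eigen_residual_def F_def G_def inv_fourier_diff inv_fourier_cmult summable_on_cmult_right
      f g summable_on_UAMO[OF assms(1-4)])

lemma fourier_walk_eigen_if_summable:
  assumes "0 \<le> l2" "l2 \<le> 1"
    and f: "(\<lambda>n. fst (psi n)) summable_on UNIV" and g: "(\<lambda>n. snd (psi n)) summable_on UNIV"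
    and eig: "\<forall>n. UAMO l1 l2 Phi th psi n = (z * fst (psi n), z * snd (psi n))"
  shows "fourier_walk l1 l2 Phi th (inv_fourier (\<lambda>n. fst (psi n))) (inv_fourier (\<lambda>n. snd (psi n))) x
           = (z * inv_fourier (\<lambda>n. fst (psi n)) x, z * inv_fourier (\<lambda>n. snd (psi n)) x)"
proof -
  have "eigen_residual l1 l2 Phi th z psi n = 0" for n
    by (simp add: eigen_residual_def eig)
  then have "inv_fourier (\<lambda>n. fst (eigen_residual l1 l2 Phi th z psi n)) x = 0"
    "inv_fourier (\<lambda>n. snd (eigen_residual l1 l2 Phi th z psi n)) x = 0"
    by (simp_all add: inv_fourier_def)
  then show ?thesis
    using inv_fourier_eigen_residual[OF assms(1-4), of l1 Phi th z x]
    by (metis eq_iff_diff_eq_0 zero_prod_def)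
qed

lemma fourier_cos_mult_diff:
  "fourier_cos_mult Phi th (\<lambda>y. F y - F' y) x = fourier_cos_mult Phi th F x - fourier_cos_mult Phi th F' x"
  by (simp add: fourier_cos_mult_def field_simps)

lemma fourier_sin_mult_diff:
  "fourier_sin_mult Phi th (\<lambda>y. F y - F' y) x = fourier_sin_mult Phi th F x - fourier_sin_mult Phi th F' x"
  by (simp add: fourier_sin_mult_def field_simps)

lemma fourier_coin_diff:
  "fourier_coin l2 Phi th (\<lambda>y. F y - F' y) (\<lambda>y. G y - G' y) x
     = fourier_coin l2 Phi th F G x - fourier_coin l2 Phi th F' G' x"
  unfolding fourier_coin_def fourier_cos_mult_diff fourier_sin_mult_diff
  by (simp add: prod_eq_iff algebra_simps)

lemma fourier_walk_diff:
  "fourier_walk l1 l2 Phi th (\<lambda>y. F y - F' y) (\<lambda>y. G y - G' y) x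
     = fourier_walk l1 l2 Phi th F G x - fourier_walk l1 l2 Phi th F' G' x"
  unfolding fourier_walk_def fourier_coin_diff Let_def
  by (simp add: prod_eq_iff algebra_simps)

lemma norm_fourier_cos_mult_le:
  "cmod (fourier_cos_mult Phi th F x) \<le> (cmod (F (x + Phi)) + cmod (F (x - Phi))) / 2"
  unfolding fourier_cos_mult_def
  using norm_triangle_ineq[of "cis (2 * pi * th) * F (x + Phi)" "inverse (cis (2 * pi * th)) * F (x - Phi)"]
  by (simp add: norm_divide norm_mult)

lemma norm_fourier_sin_mult_le:
  "cmod (fourier_sin_mult Phi th F x) \<le> (cmod (F (x + Phi)) + cmod (F (x - Phi))) / 2"
  unfolding fourier_sin_mult_def
  using norm_triangle_ineq4[of "cis (2 * pi * th) * F (x + Phi)" "inverse (cis (2 * pi * th)) * F (x - Phi)"]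
  by (simp add: norm_divide norm_mult)

definition neighbour_mass :: "real \<Rightarrow> (real \<Rightarrow> complex) \<Rightarrow> (real \<Rightarrow> complex) \<Rightarrow> real \<Rightarrow> real" where
  "neighbour_mass Phi F G x = (\<Sum>i\<in>{-1, 0, 1::int}. cmod (F (x + of_int i * Phi)) + cmod (G (x + of_int i * Phi)))"

lemma neighbour_mass_eq:
  "neighbour_mass Phi F G x = cmod (F (x + Phi)) + cmod (F (x - Phi)) + cmod (F x)
     + cmod (G (x + Phi)) + cmod (G (x - Phi)) + cmod (G x)"
  by (simp add: neighbour_mass_def)

lemma norm_fourier_coin_le:
  assumes "0 \<le> l2" "l2 \<le> 1"
  shows "cmod (fst (fourier_coin l2 Phi th F G x)) \<le> neighbour_mass Phi F G x"
    and "cmod (snd (fourier_coin l2 Phi th F G x)) \<le> neighbour_mass Phi F G x"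
proof -
  have scale: "cmod (complex_of_real l2 * w) \<le> cmod w" "cmod (\<i> * complex_of_real (lamc l2) * w) \<le> cmod w"
    for w
    using assms(1,2) lamc_bounds[OF assms(1,2)] by (auto simp: norm_mult intro!: mult_left_le_one_le)
  have triangle: "cmod (a - b + c) \<le> cmod a + cmod b + cmod c" "cmod (a + b - c) \<le> cmod a + cmod b + cmod c"
    for a b c :: complex
    using norm_triangle_ineq[of "a - b" c] norm_triangle_ineq4[of a b]
      norm_triangle_ineq4[of "a + b" c] norm_triangle_ineq[of a b] by linarith+
  have "cmod (fst (fourier_coin l2 Phi th F G x))
      \<le> cmod (fourier_cos_mult Phi th F x) + cmod (fourier_sin_mult Phi th G x) + cmod (F x)"
    unfolding fourier_coin_def fst_conv using triangle(1) scale by (smt (verit))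
  then show "cmod (fst (fourier_coin l2 Phi th F G x)) \<le> neighbour_mass Phi F G x"
    unfolding neighbour_mass_eq
    using norm_fourier_cos_mult_le[of Phi th F x] norm_fourier_sin_mult_le[of Phi th G x]
      norm_ge_zero[of "F (x + Phi)"] norm_ge_zero[of "F (x - Phi)"]
      norm_ge_zero[of "G (x + Phi)"] norm_ge_zero[of "G (x - Phi)"] norm_ge_zero[of "G x"]
    by argo
  have "cmod (snd (fourier_coin l2 Phi th F G x))
      \<le> cmod (fourier_sin_mult Phi th F x) + cmod (fourier_cos_mult Phi th G x) + cmod (G x)"
    unfolding fourier_coin_def snd_conv using triangle(2) scale by (smt (verit))
  then show "cmod (snd (fourier_coin l2 Phi th F G x)) \<le> neighbour_mass Phi F G x"
    unfolding neighbour_mass_eq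
    using norm_fourier_sin_mult_le[of Phi th F x] norm_fourier_cos_mult_le[of Phi th G x]
      norm_ge_zero[of "F (x + Phi)"] norm_ge_zero[of "F (x - Phi)"]
      norm_ge_zero[of "G (x + Phi)"] norm_ge_zero[of "G (x - Phi)"] norm_ge_zero[of "F x"]
    by argo
qed

lemma norm_fourier_walk_le:
  assumes "0 \<le> l1" "l1 \<le> 1" "0 \<le> l2" "l2 \<le> 1"
  shows "norm (fourier_walk l1 l2 Phi th F G x) \<le> 4 * neighbour_mass Phi F G x"
proof -
  define w where "w = fourier_coin l2 Phi th F G x"
  have scale: "cmod (complex_of_real l1 * cis a * v) \<le> cmod v" "cmod (complex_of_real (lamc l1) * v) \<le> cmod v"
    for a v
    using assms(1,2) lamc_bounds[OF assms(1,2)] by (auto simp: norm_mult intro!: mult_left_le_one_le)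
  have "cmod (fst (fourier_walk l1 l2 Phi th F G x)) \<le> cmod (fst w) + cmod (snd w)"
    unfolding fourier_walk_def Let_def w_def[symmetric] fst_conv
    using norm_triangle_ineq4 scale by (smt (verit))
  moreover have "cmod (snd (fourier_walk l1 l2 Phi th F G x)) \<le> cmod (fst w) + cmod (snd w)"
    unfolding fourier_walk_def Let_def w_def[symmetric] snd_conv
    using norm_triangle_ineq scale by (smt (verit))
  moreover note norm_fourier_coin_le[OF assms(3,4), of Phi th F G x, folded w_def]
  ultimately show ?thesis
    using norm_Pair_le[of "fst (fourier_walk l1 l2 Phi th F G x)" "snd (fourier_walk l1 l2 Phi th F G x)"]
    by simp
qed

lemma norm_fourier_walk_residual_le:
  assumes "0 \<le> l1" "l1 \<le> 1" "0 \<le> l2" "l2 \<le> 1" and "cmod z = 1"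
  shows "norm (fourier_walk l1 l2 Phi th F G x - (z * F x, z * G x)) \<le> 5 * neighbour_mass Phi F G x"
proof -
  have "norm (z * F x, z * G x) \<le> cmod (F x) + cmod (G x)"
    using norm_Pair_le[of "z * F x" "z * G x"] assms(5) by (simp add: norm_mult)
  also have "\<dots> \<le> neighbour_mass Phi F G x"
    unfolding neighbour_mass_eq by simp
  finally show ?thesis
    using norm_fourier_walk_le[OF assms(1-4), of Phi th F G x]
      norm_triangle_ineq4[of "fourier_walk l1 l2 Phi th F G x" "(z * F x, z * G x)"]
    by linarith
qed

lemma norm_fourier_walk_residual_diff_le:
  assumes "0 \<le> l1" "l1 \<le> 1" "0 \<le> l2" "l2 \<le> 1" and "cmod z = 1"
  shows "norm (fourier_walk l1 l2 Phi th F G x - (z * F x, z * G x)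
               - (fourier_walk l1 l2 Phi th F' G' x - (z * F' x, z * G' x)))
           \<le> 5 * neighbour_mass Phi (\<lambda>y. F y - F' y) (\<lambda>y. G y - G' y) x"
proof -
  have "fourier_walk l1 l2 Phi th F G x - (z * F x, z * G x)
          - (fourier_walk l1 l2 Phi th F' G' x - (z * F' x, z * G' x))
      = fourier_walk l1 l2 Phi th (\<lambda>y. F y - F' y) (\<lambda>y. G y - G' y) x
          - (z * (F x - F' x), z * (G x - G' x))"
    by (simp add: fourier_walk_diff prod_eq_iff algebra_simps)
  then show ?thesis
    using norm_fourier_walk_residual_le[OF assms] by simp
qed

lemma borel_measurable_fourier_walk:
  assumes "F \<in> borel_measurable borel" "G \<in> borel_measurable borel"
  shows "fourier_walk l1 l2 Phi th F G \<in> borel_measurable borel"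
proof -
  have shift: "(\<lambda>x. H (x + a)) \<in> borel_measurable borel" "(\<lambda>x. H (x - a)) \<in> borel_measurable borel"
    if "H \<in> borel_measurable borel" for H :: "real \<Rightarrow> complex" and a
    using measurable_compose[OF _ that, of "\<lambda>x. x + a" borel] measurable_compose[OF _ that, of "\<lambda>x. x - a" borel]
    by (simp_all add: o_def)
  have [measurable]: "(\<lambda>x::real. cis (2 * pi * x)) \<in> borel_measurable borel"
    "(\<lambda>x::real. cis (- (2 * pi * x))) \<in> borel_measurable borel"
    by (intro borel_measurable_continuous_onI continuous_intros)+
  note [measurable] = assms shift[OF assms(1)] shift[OF assms(2)]
  show ?thesis
    unfolding fourier_walk_def fourier_coin_def fourier_cos_mult_def fourier_sin_mult_def Let_def fst_conv snd_conv
    by measurable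
qed

lemma UAMO_dual_phi_seq:
  "UAMO_dual l1 l2 Phi xi (phi_seq Phi th F G xi) n =
     (let c = cis (2 * pi * of_int n * th) / complex_of_real (sqrt 2);
          w = fourier_walk l1 l2 Phi th F G (of_int n * Phi + xi)
      in (c * (fst w + \<i> * snd w), c * (\<i> * fst w + snd w)))"
proof -
  define x where "x = of_int n * Phi + xi"
  have shifts: "of_int (n + 1) * Phi + xi = x + Phi" "of_int (n - 1) * Phi + xi = x - Phi"
    by (simp_all add: x_def algebra_simps)
  have phases: "2 * pi * of_int (n + 1) * th = 2 * pi * of_int n * th + 2 * pi * th"
    "2 * pi * of_int (n - 1) * th = 2 * pi * of_int n * th - 2 * pi * th"
    "2 * pi * (of_int n * Phi + xi) = 2 * pi * x"
    by (simp_all add: x_def algebra_simps)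
  define a where "a = cis (2 * pi * x)"
  define t where "t = cis (2 * pi * th)"
  define s where "s = cis (2 * pi * of_int n * th)"
  have nonzero: "a \<noteq> 0" "t \<noteq> 0" "s \<noteq> 0" "complex_of_real (sqrt 2) \<noteq> 0"
    by (simp_all add: a_def t_def s_def)
  have cis_phases: "cis (2 * pi * of_int n * th + 2 * pi * th) = s * t"
    "cis (2 * pi * of_int n * th - 2 * pi * th) = s / t" "cis (- (2 * pi * x)) = inverse a"
    by (simp_all add: s_def t_def a_def cis_mult cis_divide cis_inverse)
  show ?thesis
    unfolding UAMO_dual_def walk_transpose_def coin_def phi_seq_def fourier_walk_def fourier_coin_def
      fourier_cos_mult_def fourier_sin_mult_def Let_def x_def[symmetric]
    apply (simp only: shifts phases cis_phases of_real_mult cos_eq_cis sin_eq_cis fst_conv snd_conv)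
    apply (simp only: a_def[symmetric] t_def[symmetric] s_def[symmetric] cis_phases)
    using nonzero by (simp add: field_simps prod_eq_iff)
qed

lemma UAMO_dual_phi_seq_eigen:
  assumes "fourier_walk l1 l2 Phi th F G (of_int n * Phi + xi)
             = (z * F (of_int n * Phi + xi), z * G (of_int n * Phi + xi))"
  shows "UAMO_dual l1 l2 Phi xi (phi_seq Phi th F G xi) n
           = (z * fst (phi_seq Phi th F G xi n), z * snd (phi_seq Phi th F G xi n))"
  unfolding UAMO_dual_phi_seq Let_def assms phi_seq_def fst_conv snd_conv
  by (simp only: ring_distribs mult_ac)


section \<open>Truncated eigenvectors\<close>

definition weight :: "(int \<Rightarrow> complex \<times> complex) \<Rightarrow> int \<Rightarrow> real" where
  "weight psi n = cmod (fst (psi n)) + cmod (snd (psi n))"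

definition local_weight :: "(int \<Rightarrow> complex \<times> complex) \<Rightarrow> int \<Rightarrow> real" where
  "local_weight psi n = weight psi (n - 1) + weight psi n + weight psi (n + 1)"

definition boundary_weight :: "(int \<Rightarrow> complex \<times> complex) \<Rightarrow> nat \<Rightarrow> real" where
  "boundary_weight psi N = local_weight psi (- int N - 1) + local_weight psi (- int N)
     + local_weight psi (int N) + local_weight psi (int N + 1)"

lemma weight_nonneg: "0 \<le> weight psi n"
  by (simp add: weight_def)

lemma local_weight_nonneg: "0 \<le> local_weight psi n"
  by (simp add: local_weight_def weight_nonneg)

lemma weight_coin_op_le:
  assumes "0 \<le> l2" "l2 \<le> 1"
  shows "cmod (fst (coin_op (coin l2 Phi th) psi n)) \<le> 2 * weight psi n"
    and "cmod (snd (coin_op (coin l2 Phi th) psi n)) \<le> 2 * weight psi n"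
proof -
  have entry: "cmod (coin l2 Phi th n j k * w) \<le> 2 * cmod w" for j k w
    using norm_coin_le[OF assms, of Phi th n j k] by (simp add: norm_mult mult_right_mono)
  show "cmod (fst (coin_op (coin l2 Phi th) psi n)) \<le> 2 * weight psi n"
    using entry[of 1 1 "fst (psi n)"] entry[of 1 2 "snd (psi n)"] norm_triangle_ineq
    unfolding coin_op_def weight_def by (smt (verit) fst_conv)
  show "cmod (snd (coin_op (coin l2 Phi th) psi n)) \<le> 2 * weight psi n"
    using entry[of 2 1 "fst (psi n)"] entry[of 2 2 "snd (psi n)"] norm_triangle_ineq
    unfolding coin_op_def weight_def by (smt (verit) snd_conv)
qed

lemma weight_UAMO_le:
  assumes "0 \<le> l1" "l1 \<le> 1" "0 \<le> l2" "l2 \<le> 1"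
  shows "weight (UAMO l1 l2 Phi th psi) n \<le> 4 * local_weight psi n"
proof -
  define u where "u = coin_op (coin l2 Phi th) psi"
  note coin_bounds = weight_coin_op_le[OF assms(3,4), of Phi th psi, folded u_def]
  have contraction: "cmod (complex_of_real l1 * w) \<le> cmod w" "cmod (complex_of_real (lamc l1) * w) \<le> cmod w"
    for w
    using assms(1,2) lamc_bounds[OF assms(1,2)] by (auto simp: norm_mult intro!: mult_left_le_one_le)
  have "cmod (fst (UAMO l1 l2 Phi th psi n)) \<le> cmod (fst (u (n - 1))) + cmod (snd (u n))"
    unfolding UAMO_def shift_op_def u_def[symmetric] fst_conv
    using norm_triangle_ineq4 contraction by (smt (verit))
  moreover have "cmod (snd (UAMO l1 l2 Phi th psi n)) \<le> cmod (fst (u n)) + cmod (snd (u (n + 1)))"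
    unfolding UAMO_def shift_op_def u_def[symmetric] snd_conv
    using norm_triangle_ineq contraction by (smt (verit))
  ultimately show ?thesis
    unfolding weight_def[of "UAMO l1 l2 Phi th psi"] local_weight_def
    using coin_bounds[of "n - 1"] coin_bounds[of n] coin_bounds[of "n + 1"]
      weight_nonneg[of psi "n - 1"] weight_nonneg[of psi "n + 1"]
    by (smt (verit))
qed

lemma UAMO_local:
  assumes "psi (n - 1) = psi' (n - 1)" "psi n = psi' n" "psi (n + 1) = psi' (n + 1)"
  shows "UAMO l1 l2 Phi th psi n = UAMO l1 l2 Phi th psi' n"
  unfolding UAMO_def shift_op_def coin_op_def using assms by simp

lemma eigen_residual_truncate_eq_0:
  assumes eig: "\<forall>n. UAMO l1 l2 Phi th psi n = (z * fst (psi n), z * snd (psi n))"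
    and "\<bar>n\<bar> \<noteq> int N" "\<bar>n\<bar> \<noteq> int N + 1"
  shows "eigen_residual l1 l2 Phi th z (truncate N psi) n = 0"
proof (cases "\<bar>n\<bar> < int N")
  case True
  then have "UAMO l1 l2 Phi th (truncate N psi) n = UAMO l1 l2 Phi th psi n"
    by (intro UAMO_local) (auto simp: truncate_def)
  with True eig show ?thesis
    by (simp add: eigen_residual_def truncate_def)
next
  case False
  with assms(2,3) have "UAMO l1 l2 Phi th (truncate N psi) n = UAMO l1 l2 Phi th (\<lambda>_. 0) n"
    by (intro UAMO_local) (auto simp: truncate_def)
  also have "\<dots> = 0"
    by (simp add: UAMO_def shift_op_def coin_op_def zero_prod_def)
  finally show ?thesis
    using False assms(2,3) by (simp add: eigen_residual_def truncate_def zero_prod_def)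
qed

lemma weight_eigen_residual_le:
  assumes l: "0 \<le> l1" "l1 \<le> 1" "0 \<le> l2" "l2 \<le> 1" and z: "cmod z = 1"
  shows "weight (eigen_residual l1 l2 Phi th z psi) n \<le> 5 * local_weight psi n"
proof -
  have "weight (eigen_residual l1 l2 Phi th z psi) n \<le> weight (UAMO l1 l2 Phi th psi) n + weight psi n"
    using norm_triangle_ineq4[of "fst (UAMO l1 l2 Phi th psi n)" "z * fst (psi n)"]
      norm_triangle_ineq4[of "snd (UAMO l1 l2 Phi th psi n)" "z * snd (psi n)"]
    by (simp add: weight_def eigen_residual_def norm_mult z)
  moreover have "weight psi n \<le> local_weight psi n"
    unfolding local_weight_def using weight_nonneg[of psi] by (smt (verit))
  ultimately show ?thesis
    using weight_UAMO_le[OF l, of Phi th psi n] by linarith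
qed

lemma local_weight_truncate_le: "local_weight (truncate N psi) n \<le> local_weight psi n"
proof -
  have "weight (truncate N psi) m \<le> weight psi m" for m
    by (simp add: weight_def truncate_def)
  then show ?thesis
    unfolding local_weight_def by (intro add_mono)
qed

lemma norm_fourier_walk_partial_sum_residual_le:
  fixes N :: nat
  assumes l: "0 \<le> l1" "l1 \<le> 1" "0 \<le> l2" "l2 \<le> 1" and z: "cmod z = 1"
    and eig: "\<forall>n. UAMO l1 l2 Phi th psi n = (z * fst (psi n), z * snd (psi n))"
  defines "F \<equiv> fourier_partial_sum N (\<lambda>n. fst (psi n))"
    and "G \<equiv> fourier_partial_sum N (\<lambda>n. snd (psi n))"
  shows "norm (fourier_walk l1 l2 Phi th F G x - (z * F x, z * G x)) \<le> 5 * boundary_weight psi N"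
proof -
  define R where "R = eigen_residual l1 l2 Phi th z (truncate N psi)"
  define B where "B = {- int N - 1, - int N, int N, int N + 1}"
  have "F = inv_fourier (\<lambda>n. fst (truncate N psi n))" "G = inv_fourier (\<lambda>n. snd (truncate N psi n))"
    by (simp_all add: F_def G_def inv_fourier_truncate fun_eq_iff)
  then have "fourier_walk l1 l2 Phi th F G x - (z * F x, z * G x)
      = (inv_fourier (\<lambda>n. fst (R n)) x, inv_fourier (\<lambda>n. snd (R n)) x)"
    unfolding R_def by (simp add: inv_fourier_eigen_residual[OF l(3,4)] summable_on_truncate)
  then have "norm (fourier_walk l1 l2 Phi th F G x - (z * F x, z * G x))
      \<le> cmod (inv_fourier (\<lambda>n. fst (R n)) x) + cmod (inv_fourier (\<lambda>n. snd (R n)) x)"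
    by (simp add: norm_Pair_le)
  also have "\<dots> \<le> (\<Sum>n\<in>B. cmod (fst (R n))) + (\<Sum>n\<in>B. cmod (snd (R n)))"
    using eigen_residual_truncate_eq_0[OF eig]
    by (intro add_mono norm_inv_fourier_le_finite_support) (auto simp: B_def R_def)
  also have "\<dots> = (\<Sum>n\<in>B. weight R n)"
    by (simp add: weight_def sum.distrib)
  also have "\<dots> \<le> (\<Sum>n\<in>B. 5 * local_weight psi n)"
    unfolding R_def using weight_eigen_residual_le[OF l z] local_weight_truncate_le
    by (intro sum_mono) (meson mult_left_mono order.trans zero_le_numeral)
  also have "\<dots> \<le> 5 * boundary_weight psi N"
    using local_weight_nonneg[of psi]
    by (cases "N = 0") (simp_all add: B_def boundary_weight_def)
  finally show ?thesis .
qed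

lemma weight_tendsto_0:
  assumes "in_l2 psi" and "inj (h :: nat \<Rightarrow> int)"
  shows "(\<lambda>N. weight psi (h N)) \<longlonglongrightarrow> 0"
proof -
  define q where "q n = (cmod (fst (psi n)))\<^sup>2 + (cmod (snd (psi n)))\<^sup>2" for n
  have "q summable_on UNIV"
    using assms(1) unfolding in_l2_def q_def .
  then have "q summable_on range h"
    by (rule summable_on_subset) simp
  then have "(q \<circ> h) summable_on UNIV"
    using summable_on_reindex[of h UNIV q] assms(2) by simp
  then have "summable (q \<circ> h)"
    by (subst (asm) summable_on_UNIV_nonneg_real_iff) (auto simp: q_def)
  then have "(q \<circ> h) \<longlonglongrightarrow> 0"
    by (rule summable_LIMSEQ_zero)
  then have "(\<lambda>N. sqrt (2 * q (h N))) \<longlonglongrightarrow> sqrt (2 * 0)"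
    by (intro tendsto_real_sqrt tendsto_mult tendsto_const) (simp add: o_def)
  then have limit: "(\<lambda>N. sqrt (2 * q (h N))) \<longlonglongrightarrow> 0"
    by simp
  have "norm (weight psi (h N)) \<le> sqrt (2 * q (h N))" for N
  proof -
    have "(weight psi (h N))\<^sup>2 \<le> 2 * q (h N)"
      unfolding weight_def q_def by (rule power2_sum_le)
    then show ?thesis
      using weight_nonneg[of psi "h N"] real_le_rsqrt by simp
  qed
  then show ?thesis
    by (intro Lim_null_comparison[OF always_eventually limit] allI)
qed

lemma boundary_weight_tendsto_0:
  assumes "in_l2 psi"
  shows "boundary_weight psi \<longlonglongrightarrow> 0"
proof -
  have weight: "(\<lambda>N. weight psi (int N + k)) \<longlonglongrightarrow> 0" "(\<lambda>N. weight psi (k - int N)) \<longlonglongrightarrow> 0" for k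
    by (rule weight_tendsto_0[OF assms], simp add: inj_def)+
  have right: "(\<lambda>N. local_weight psi (int N + k)) \<longlonglongrightarrow> 0 + 0 + 0" for k
    unfolding local_weight_def using weight(1)[of "k - 1"] weight(1)[of k] weight(1)[of "k + 1"]
    by (intro tendsto_add) (simp_all add: algebra_simps)
  have left: "(\<lambda>N. local_weight psi (k - int N)) \<longlonglongrightarrow> 0 + 0 + 0" for k
    unfolding local_weight_def using weight(2)[of "k - 1"] weight(2)[of k] weight(2)[of "k + 1"]
    by (intro tendsto_add) (simp_all add: algebra_simps)
  have "(\<lambda>N. local_weight psi (- int N - 1)) \<longlonglongrightarrow> 0 + 0 + 0"
  proof -
    have "- int N - 1 = - 1 - int N" for N
      by simp
    show ?thesis
      unfolding \<open>\<And>N. - int N - 1 = - 1 - int N\<close> by (rule left)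
  qed
  then have "(\<lambda>N. local_weight psi (- int N - 1) + local_weight psi (0 - int N)
      + local_weight psi (int N + 0) + local_weight psi (int N + 1))
      \<longlonglongrightarrow> (0 + 0 + 0) + (0 + 0 + 0) + (0 + 0 + 0) + (0 + 0 + 0)"
    by (intro tendsto_add left right)
  then show ?thesis
    by (simp add: boundary_weight_def[abs_def])
qed


section \<open>The eigenvalue equation for the dual operator\<close>

lemma AE_fourier_walk_eigen:
  assumes l: "0 \<le> l1" "l1 \<le> 1" "0 \<le> l2" "l2 \<le> 1" and z: "cmod z = 1"
    and eig: "\<forall>n. UAMO l1 l2 Phi th psi n = (z * fst (psi n), z * snd (psi n))"
    and "in_l2 psi"
    and gp: "is_inv_fourier_L2 (\<lambda>n. fst (psi n)) gp" and gm: "is_inv_fourier_L2 (\<lambda>n. snd (psi n)) gm"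
  shows "AE x in lborel. fourier_walk l1 l2 Phi th gp gm x = (z * gp x, z * gm x)"
proof -
  define P where "P N = fourier_partial_sum N (\<lambda>n. fst (psi n))" for N
  define Q where "Q N = fourier_partial_sum N (\<lambda>n. snd (psi n))" for N
  define e where "e N y = 5 * (cmod (gp y - P N y) + cmod (gm y - Q N y))" for N y
  have [measurable]: "gp \<in> borel_measurable borel" "gm \<in> borel_measurable borel"
    "P N \<in> borel_measurable borel" "Q N \<in> borel_measurable borel" for N
    using gp gm by (simp_all add: is_inv_fourier_L2_def P_def Q_def borel_measurable_fourier_partial_sum)
  have "AE x in lborel. fourier_walk l1 l2 Phi th gp gm x - (z * gp x, z * gm x) = 0"
  proof (rule AE_eq_0_if_periodic_L2_approximation[where I = "{-1, 0, 1 :: int}" and c = "\<lambda>i. of_int i * Phi"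
        and e = e and \<delta> = "\<lambda>N. 5 * boundary_weight psi N"
        and Fs = "\<lambda>N x. fourier_walk l1 l2 Phi th (P N) (Q N) x - (z * P N x, z * Q N x)"])
    show "(\<lambda>x. fourier_walk l1 l2 Phi th gp gm x - (z * gp x, z * gm x)) \<in> borel_measurable borel"
      using borel_measurable_fourier_walk[of gp gm l1 l2 Phi th] by measurable
    show "e N \<in> borel_measurable borel" for N
      unfolding e_def by measurable
    show "e N (x + 1) = e N x" for N x
      using gp gm by (simp add: e_def P_def Q_def is_inv_fourier_L2_def fourier_partial_sum_periodic)
    show "(\<lambda>N. \<integral>\<^sup>+x\<in>{0..1}. ennreal ((e N x)\<^sup>2) \<partial>lborel) \<longlonglongrightarrow> 0"
    proof -
      have "(\<lambda>N. \<integral>\<^sup>+x\<in>{0..1}. ennreal ((cmod (gp x - P N x))\<^sup>2) \<partial>lborel) \<longlonglongrightarrow> 0"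
        "(\<lambda>N. \<integral>\<^sup>+x\<in>{0..1}. ennreal ((cmod (gm x - Q N x))\<^sup>2) \<partial>lborel) \<longlonglongrightarrow> 0"
        using gp gm by (simp_all add: is_inv_fourier_L2_def P_def Q_def fourier_partial_sum_def)
      then show ?thesis
        unfolding e_def by (intro set_nn_integral_scaled_sum_square_tendsto_0) simp_all
    qed
    show "norm (fourier_walk l1 l2 Phi th gp gm x - (z * gp x, z * gm x)
          - (fourier_walk l1 l2 Phi th (P N) (Q N) x - (z * P N x, z * Q N x)))
        \<le> (\<Sum>i\<in>{-1, 0, 1}. e N (x + of_int i * Phi))" for N x
      using norm_fourier_walk_residual_diff_le[OF l z, of Phi th gp gm x "P N" "Q N"]
      by (simp add: neighbour_mass_def e_def)
    show "norm (fourier_walk l1 l2 Phi th (P N) (Q N) x - (z * P N x, z * Q N x)) \<le> 5 * boundary_weight psi N"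
      for N x
      unfolding P_def Q_def by (rule norm_fourier_walk_partial_sum_residual_le[OF l z eig])
    show "(\<lambda>N. 5 * boundary_weight psi N) \<longlonglongrightarrow> 0"
      using tendsto_mult_right_zero[OF boundary_weight_tendsto_0[OF \<open>in_l2 psi\<close>]] by simp
  qed
  then show ?thesis
    by simp
qed

theorem theorem2p2:
  fixes l1 l2 Phi th :: real and z :: complex and psi :: "int \<Rightarrow> complex \<times> complex"
  assumes "0 \<le> l1" "l1 \<le> 1" "0 \<le> l2" "l2 \<le> 1"
    and "Phi \<notin> \<rat>"
    and "in_l2 psi"
    and "cmod z = 1"
    and "\<forall>n. UAMO l1 l2 Phi th psi n = (z * fst (psi n), z * snd (psi n))"
  shows "(\<forall>gp gm. is_inv_fourier_L2 (\<lambda>n. fst (psi n)) gp \<and> is_inv_fourier_L2 (\<lambda>n. snd (psi n)) gm \<longrightarrow>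
            (AE xi in lborel. \<forall>n.
               UAMO_dual l1 l2 Phi xi (phi_seq Phi th gp gm xi) n
                 = (z * fst (phi_seq Phi th gp gm xi n), z * snd (phi_seq Phi th gp gm xi n))))
       \<and> (in_l1 psi \<longrightarrow>
            (\<forall>xi. \<forall>n.
               UAMO_dual l1 l2 Phi xi
                  (phi_seq Phi th (inv_fourier (\<lambda>n. fst (psi n))) (inv_fourier (\<lambda>n. snd (psi n))) xi) n
                 = (z * fst (phi_seq Phi th (inv_fourier (\<lambda>n. fst (psi n))) (inv_fourier (\<lambda>n. snd (psi n))) xi n),
                    z * snd (phi_seq Phi th (inv_fourier (\<lambda>n. fst (psi n))) (inv_fourier (\<lambda>n. snd (psi n))) xi n))))"
proof (intro conjI allI impI)
  fix gp gm
  assume "is_inv_fourier_L2 (\<lambda>n. fst (psi n)) gp \<and> is_inv_fourier_L2 (\<lambda>n. snd (psi n)) gm"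
  then have "AE x in lborel. fourier_walk l1 l2 Phi th gp gm x = (z * gp x, z * gm x)"
    using AE_fourier_walk_eigen[OF assms(1-4,7,8,6)] by blast
  then show "AE xi in lborel. \<forall>n.
      UAMO_dual l1 l2 Phi xi (phi_seq Phi th gp gm xi) n
        = (z * fst (phi_seq Phi th gp gm xi n), z * snd (phi_seq Phi th gp gm xi n))"
    by (rule AE_lborel_orbit[where Phi = Phi, THEN eventually_mono]) (simp add: UAMO_dual_phi_seq_eigen)
next
  fix xi n
  assume "in_l1 psi"
  then have "(\<lambda>n. fst (psi n)) summable_on UNIV" "(\<lambda>n. snd (psi n)) summable_on UNIV"
    unfolding in_l1_def summable_on_iff_abs_summable_on_complex
    by (auto intro: summable_on_comparison_test)
  then show "UAMO_dual l1 l2 Phi xi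
      (phi_seq Phi th (inv_fourier (\<lambda>n. fst (psi n))) (inv_fourier (\<lambda>n. snd (psi n))) xi) n
        = (z * fst (phi_seq Phi th (inv_fourier (\<lambda>n. fst (psi n))) (inv_fourier (\<lambda>n. snd (psi n))) xi n),
           z * snd (phi_seq Phi th (inv_fourier (\<lambda>n. fst (psi n))) (inv_fourier (\<lambda>n. snd (psi n))) xi n))"
    by (intro UAMO_dual_phi_seq_eigen fourier_walk_eigen_if_summable assms(3,4,8))
qed

end
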